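(* Let $T$ be a tree rooted at $r$, and let $Z$ be a set of vertices. Then: (a) If $\alpha(T)>\alpha(T-Z)$ and $r$ is $\alpha$-critical in $T$, then either (i) there exist two (possibly non-distinct) vertices $u,v\in Z\cap V(T)$ such that $\alpha(T)>\alpha(T-\{u,v\})$ and $r$ is $\alpha$-critical in $T-\{u,v\}$, or (ii) there exists a vertex $u\in Z\cap V(T)$ such that $\alpha(T)>\alpha(T-u)$ and $r$ is not $\alpha$-critical in $T-u$. (b) If $\alpha(T)=\alpha(T-Z)$ and $r$ is $\alpha$-critical in $T-Z$ but not in $T$, then there exists a vertex $u\in Z\cap V(T)$ such that $r$ is $\alpha$-critical in $T-u$.
   Context: $\alpha(H)$ is the independence number of a graph $H$. A vertex $v$ of $H$ is $\alpha$-critical in $H$ if it belongs to every maximum independent set of $H$, i.e. $\alpha(H) = 1+\alpha(H-v)$ (in particular $v\in V(H)$). $T-S$ denotes $T$ with the vertices of $S\cap V(T)$ and incident edges removed. *)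

theory Defs
  imports Main
begin

(* A simple graph: vertex set V, symmetric irreflexive adjacency relation E
   (E is only consulted on vertices of V). *)

definition simple_graph :: "'a set \<Rightarrow> ('a \<Rightarrow> 'a \<Rightarrow> bool) \<Rightarrow> bool" where
  "simple_graph V E \<longleftrightarrow> finite V \<and> (\<forall>x y. E x y \<longrightarrow> E y x) \<and> (\<forall>x. \<not> E x x)"

definition is_walk :: "'a set \<Rightarrow> ('a \<Rightarrow> 'a \<Rightarrow> bool) \<Rightarrow> 'a list \<Rightarrow> bool" where
  "is_walk V E p \<longleftrightarrow> p \<noteq> [] \<and> set p \<subseteq> V \<and> (\<forall>i. Suc i < length p \<longrightarrow> E (p ! i) (p ! Suc i))"

definition connected_graph :: "'a set \<Rightarrow> ('a \<Rightarrow> 'a \<Rightarrow> bool) \<Rightarrow> bool" where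
  "connected_graph V E \<longleftrightarrow> V \<noteq> {} \<and>
     (\<forall>x\<in>V. \<forall>y\<in>V. \<exists>p. is_walk V E p \<and> hd p = x \<and> last p = y)"

definition is_cycle :: "'a set \<Rightarrow> ('a \<Rightarrow> 'a \<Rightarrow> bool) \<Rightarrow> 'a list \<Rightarrow> bool" where
  "is_cycle V E c \<longleftrightarrow> is_walk V E c \<and> distinct c \<and> length c \<ge> 3 \<and> E (last c) (hd c)"

definition is_tree :: "'a set \<Rightarrow> ('a \<Rightarrow> 'a \<Rightarrow> bool) \<Rightarrow> bool" where
  "is_tree V E \<longleftrightarrow> simple_graph V E \<and> connected_graph V E \<and> (\<nexists>c. is_cycle V E c)"

definition independent_set :: "'a set \<Rightarrow> ('a \<Rightarrow> 'a \<Rightarrow> bool) \<Rightarrow> 'a set \<Rightarrow> bool" where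
  "independent_set V E S \<longleftrightarrow> S \<subseteq> V \<and> (\<forall>x\<in>S. \<forall>y\<in>S. \<not> E x y)"

(* independence number of the graph induced on V (V finite) *)
definition alpha :: "'a set \<Rightarrow> ('a \<Rightarrow> 'a \<Rightarrow> bool) \<Rightarrow> nat" where
  "alpha V E = Max (card ` {S. independent_set V E S})"

definition alpha_critical :: "'a set \<Rightarrow> ('a \<Rightarrow> 'a \<Rightarrow> bool) \<Rightarrow> 'a \<Rightarrow> bool" where
  "alpha_critical V E v \<longleftrightarrow> v \<in> V \<and> alpha V E = 1 + alpha (V - {v}) E"

end

theory Submission
  imports Defs
begin

text \<open>
  Trees are bipartite, and in a bipartite graph with sides \<open>A\<close> and \<open>-A\<close> the maximum independent
  sets form a lattice: for maximum independent sets \<open>X\<close>, \<open>Y\<close> the set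
  \<open>(X \<inter> Y \<inter> A) \<union> ((X \<union> Y) - A)\<close> is independent, and its size plus that of its mirror image
  (with the sides exchanged) is \<open>|X| + |Y|\<close>, so both are maximum. Such meets merge maximum
  independent sets avoiding different vertices of \<open>A\<close> into one avoiding all of them.

  Put the root \<open>r\<close> in \<open>A\<close>. In (b), a maximum set avoiding \<open>Z\<close> and, for each \<open>u \<in> Z\<close>, one
  avoiding \<open>u\<close> and \<open>r\<close> merge into a maximum set of \<open>T\<close> avoiding \<open>Z\<close> and \<open>r\<close>, contradicting
  the criticality of \<open>r\<close> in \<open>T - Z\<close>. In (a), if both alternatives fail, maximum independent sets
  of \<open>T - r\<close> avoiding the neighbourhood \<open>N\<close> of \<open>r\<close> together with one or two vertices of \<open>Z\<close>
  exist; merging them first on side \<open>A\<close> and then on side \<open>-A \<supseteq> N\<close> yields one avoiding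
  \<open>Z \<union> N\<close>, and adding \<open>r\<close> to it gives an independent set of \<open>T - Z\<close> of size \<open>\<alpha>(T)\<close>.
\<close>

definition max_indep_set :: "'a set \<Rightarrow> ('a \<Rightarrow> 'a \<Rightarrow> bool) \<Rightarrow> 'a set \<Rightarrow> bool" where
  "max_indep_set V E S \<longleftrightarrow> independent_set V E S \<and> card S = alpha V E"

lemma finite_independent_sets: "finite V \<Longrightarrow> finite {S. independent_set V E S}"
  unfolding independent_set_def by (rule finite_subset[of _ "Pow V"]) auto

lemma independent_set_card_le_alpha:
  "finite V \<Longrightarrow> independent_set V E S \<Longrightarrow> card S \<le> alpha V E"
  unfolding alpha_def using finite_independent_sets by (intro Max_ge) auto

lemma max_indep_set_exists:
  assumes "finite V"
  shows "\<exists>S. max_indep_set V E S"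
proof -
  have "independent_set V E {}" unfolding independent_set_def by simp
  then have "alpha V E \<in> card ` {S. independent_set V E S}"
    unfolding alpha_def using finite_independent_sets[OF assms] by (intro Max_in) auto
  then show ?thesis unfolding max_indep_set_def by auto
qed

lemma alpha_mono:
  assumes "finite W" "V \<subseteq> W"
  shows "alpha V E \<le> alpha W E"
proof -
  obtain S where S: "max_indep_set V E S"
    using max_indep_set_exists finite_subset[OF assms(2,1)] by blast
  then have "independent_set W E S"
    using assms(2) unfolding max_indep_set_def independent_set_def by blast
  then show ?thesis
    using S independent_set_card_le_alpha[OF assms(1)] unfolding max_indep_set_def by fastforce
qed

lemma alpha_le_alpha_Diff_singleton:
  assumes "finite V"
  shows "alpha V E \<le> alpha (V - {x}) E + 1"
proof -
  obtain S where S: "max_indep_set V E S" using max_indep_set_exists[OF assms] by blast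
  then have "independent_set (V - {x}) E (S - {x})"
    unfolding max_indep_set_def independent_set_def by auto
  then have "card (S - {x}) \<le> alpha (V - {x}) E"
    using assms by (intro independent_set_card_le_alpha) auto
  moreover have "card S \<le> card (S - {x}) + 1"
  proof (cases "x \<in> S")
    case True
    have "finite S" using S assms unfolding max_indep_set_def independent_set_def
      by (blast intro: finite_subset)
    then show ?thesis using card_Suc_Diff1[OF _ True] by simp
  qed simp
  ultimately show ?thesis using S unfolding max_indep_set_def by linarith
qed

lemma alpha_Diff_eq_iff:
  assumes "finite V"
  shows "alpha (V - D) E = alpha V E \<longleftrightarrow> (\<exists>S. max_indep_set V E S \<and> S \<inter> D = {})"
proof
  assume eq: "alpha (V - D) E = alpha V E"
  obtain S where "max_indep_set (V - D) E S" using max_indep_set_exists assms by blast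
  then show "\<exists>S. max_indep_set V E S \<and> S \<inter> D = {}"
    using eq unfolding max_indep_set_def independent_set_def by auto
next
  assume "\<exists>S. max_indep_set V E S \<and> S \<inter> D = {}"
  then obtain S where "max_indep_set V E S" "S \<inter> D = {}" by blast
  then have "independent_set (V - D) E S"
    unfolding max_indep_set_def independent_set_def by blast
  then have "card S \<le> alpha (V - D) E"
    using assms by (intro independent_set_card_le_alpha) auto
  then have "alpha V E \<le> alpha (V - D) E"
    using \<open>max_indep_set V E S\<close> unfolding max_indep_set_def by simp
  moreover have "alpha (V - D) E \<le> alpha V E" using assms by (intro alpha_mono) auto
  ultimately show "alpha (V - D) E = alpha V E" by (rule antisym[rotated])
qed

lemma alpha_Diff_singleton_eq_if_not_critical:
  assumes "finite V" "r \<in> V" "\<not> alpha_critical V E r"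
  shows "alpha (V - {r}) E = alpha V E"
  using assms alpha_le_alpha_Diff_singleton[OF assms(1), of E r] alpha_mono[OF assms(1), of "V - {r}" E]
  unfolding alpha_critical_def by auto

lemma alpha_critical_mem_max_indep_set:
  assumes "finite V" "alpha_critical V E r" "max_indep_set V E S"
  shows "r \<in> S"
proof (rule ccontr)
  assume "r \<notin> S"
  then have "alpha (V - {r}) E = alpha V E"
    using assms(1,3) alpha_Diff_eq_iff by blast
  then show False using assms(2) unfolding alpha_critical_def by simp
qed

lemma max_indep_set_Diff_critical:
  assumes "finite V" "alpha_critical V E r" "max_indep_set V E S"
  shows "max_indep_set (V - {r}) E (S - {r})"
proof -
  have "r \<in> S" using alpha_critical_mem_max_indep_set[OF assms] .
  moreover have "finite S"
    using assms(1,3) unfolding max_indep_set_def independent_set_def by (blast intro: finite_subset)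
  ultimately have "card (S - {r}) = alpha (V - {r}) E"
    using assms(2,3) unfolding max_indep_set_def alpha_critical_def by simp
  then show ?thesis
    using assms(3) unfolding max_indep_set_def independent_set_def by auto
qed

lemma alpha_le_alpha_Diff_if_avoiding_neighbours:
  assumes fin: "finite V" and sym: "\<forall>x y. E x y \<longrightarrow> E y x"
    and crit: "alpha_critical V E r" and "r \<notin> Z"
    and X: "max_indep_set (V - {r}) E X" "X \<inter> (Z \<union> {y. E r y}) = {}"
  shows "alpha V E \<le> alpha (V - Z) E"
proof -
  have "r \<in> V" using crit unfolding alpha_critical_def by blast
  have "X \<subseteq> V - {r}" and indep: "\<forall>x\<in>X. \<forall>y\<in>X. \<not> E x y"
    using X(1) unfolding max_indep_set_def independent_set_def by blast+
  moreover have "\<not> E r r"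
  proof -
    obtain S where S: "max_indep_set V E S" using max_indep_set_exists[OF fin] by blast
    then have "r \<in> S" by (rule alpha_critical_mem_max_indep_set[OF fin crit])
    with S show ?thesis unfolding max_indep_set_def independent_set_def by blast
  qed
  ultimately have "independent_set (V - Z) E (insert r X)"
    using X(2) sym \<open>r \<in> V\<close> \<open>r \<notin> Z\<close> unfolding independent_set_def by blast
  then have "card (insert r X) \<le> alpha (V - Z) E"
    using fin by (intro independent_set_card_le_alpha) auto
  moreover have "card (insert r X) = alpha V E"
    using X(1) \<open>X \<subseteq> V - {r}\<close> crit finite_subset[OF \<open>X \<subseteq> V - {r}\<close>] fin
    unfolding max_indep_set_def alpha_critical_def by (simp add: subset_Diff_insert)
  ultimately show ?thesis by simp
qed

lemma max_indep_set_Diff_critical_avoiding_pair: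
  assumes fin: "finite V" and crit: "alpha_critical V E r" and "r \<notin> {u, v}"
    and single: "alpha (V - {u}) E = alpha V E"
    and pair: "alpha (V - {u, v}) E < alpha V E \<Longrightarrow> \<not> alpha_critical (V - {u, v}) E r"
  shows "\<exists>X. max_indep_set (V - {r}) E X \<and> X \<inter> {u, v} = {}"
proof (cases "alpha (V - {u, v}) E = alpha V E")
  case True
  then obtain S where "max_indep_set V E S" "S \<inter> {u, v} = {}"
    using alpha_Diff_eq_iff[OF fin] by metis
  then show ?thesis using max_indep_set_Diff_critical[OF fin crit] by blast
next
  case False
  then have less: "alpha (V - {u, v}) E < alpha V E" using alpha_mono[OF fin, of "V - {u, v}" E] by auto
  have "r \<in> V" using crit unfolding alpha_critical_def by blast
  then have "alpha (V - {u, v} - {r}) E = alpha (V - {u, v}) E"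
    using fin pair[OF less] \<open>r \<notin> {u, v}\<close> by (intro alpha_Diff_singleton_eq_if_not_critical) auto
  moreover have "alpha V E \<le> alpha (V - {u, v}) E + 1"
  proof -
    have "V - {u} - {v} = V - {u, v}" by auto
    then show ?thesis using single alpha_le_alpha_Diff_singleton[of "V - {u}" E v] fin by simp
  qed
  moreover have "alpha V E = alpha (V - {r}) E + 1"
    using crit unfolding alpha_critical_def by simp
  ultimately have "alpha (V - {u, v} - {r}) E = alpha (V - {r}) E"
    using less by linarith
  moreover have "V - {u, v} - {r} = V - {r} - {u, v}" by auto
  ultimately have "alpha (V - {r} - {u, v}) E = alpha (V - {r}) E" by simp
  then show ?thesis using alpha_Diff_eq_iff[of "V - {r}"] fin by blast
qed

definition bipartition :: "'a set \<Rightarrow> ('a \<Rightarrow> 'a \<Rightarrow> bool) \<Rightarrow> 'a set \<Rightarrow> bool" where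
  "bipartition V E A \<longleftrightarrow> (\<forall>x\<in>V. \<forall>y\<in>V. E x y \<longrightarrow> (x \<in> A \<longleftrightarrow> y \<notin> A))"

lemma bipartition_subset: "bipartition V E A \<Longrightarrow> W \<subseteq> V \<Longrightarrow> bipartition W E A"
  unfolding bipartition_def by blast

lemma bipartition_Compl: "bipartition V E A \<Longrightarrow> bipartition V E (- A)"
  unfolding bipartition_def by blast

definition bipartite_meet :: "'a set \<Rightarrow> 'a set \<Rightarrow> 'a set \<Rightarrow> 'a set" where
  "bipartite_meet A X Y = (X \<inter> Y \<inter> A) \<union> ((X \<union> Y) - A)"

lemma independent_set_bipartite_meet:
  assumes "bipartition W E A" "independent_set W E X" "independent_set W E Y"
  shows "independent_set W E (bipartite_meet A X Y)"
  using assms unfolding bipartition_def independent_set_def bipartite_meet_def by blast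

lemma card_bipartite_meet_add_Compl:
  assumes "finite X" "finite Y"
  shows "card (bipartite_meet A X Y) + card (bipartite_meet (- A) X Y) = card X + card Y"
proof -
  have "bipartite_meet (- A) X Y = (X \<inter> Y - A) \<union> ((X \<union> Y) \<inter> A)"
    unfolding bipartite_meet_def by auto
  then have "card (bipartite_meet A X Y) = card (X \<inter> Y \<inter> A) + card ((X \<union> Y) - A)"
    and "card (bipartite_meet (- A) X Y) = card (X \<inter> Y - A) + card ((X \<union> Y) \<inter> A)"
    unfolding bipartite_meet_def using assms by (auto intro: card_Un_disjoint)
  moreover have "card (X \<inter> Y) = card (X \<inter> Y \<inter> A) + card (X \<inter> Y - A)"
    and "card (X \<union> Y) = card ((X \<union> Y) \<inter> A) + card ((X \<union> Y) - A)"
    using assms by (auto intro: card_Int_Diff)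
  ultimately show ?thesis using card_Un_Int[OF assms] by linarith
qed

lemma max_indep_set_bipartite_meet:
  assumes "finite W" "bipartition W E A" "max_indep_set W E X" "max_indep_set W E Y"
  shows "max_indep_set W E (bipartite_meet A X Y)"
proof -
  have X: "independent_set W E X" and Y: "independent_set W E Y"
    using assms(3,4) unfolding max_indep_set_def by auto
  have "finite X" "finite Y"
    using X Y assms(1) unfolding independent_set_def by (auto intro: finite_subset)
  have "independent_set W E (bipartite_meet A X Y)"
    and "independent_set W E (bipartite_meet (- A) X Y)"
    using independent_set_bipartite_meet[OF _ X Y] assms(2) bipartition_Compl by blast+
  then have "card (bipartite_meet A X Y) \<le> alpha W E"
    and "card (bipartite_meet (- A) X Y) \<le> alpha W E"
    using independent_set_card_le_alpha[OF assms(1)] by blast+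
  then have "card (bipartite_meet A X Y) = alpha W E"
    using card_bipartite_meet_add_Compl[OF \<open>finite X\<close> \<open>finite Y\<close>, of A] assms(3,4)
    unfolding max_indep_set_def by linarith
  then show ?thesis
    using \<open>independent_set W E (bipartite_meet A X Y)\<close> unfolding max_indep_set_def by blast
qed

lemma max_indep_set_avoiding_side:
  assumes "finite W" "bipartition W E A" "max_indep_set W E X0" "X0 \<inter> C = {}"
    and "finite D" "D \<subseteq> A" "\<forall>w\<in>D. \<exists>Y. max_indep_set W E Y \<and> Y \<inter> insert w C = {}"
  shows "\<exists>X. max_indep_set W E X \<and> X \<inter> (C \<union> D) = {}"
  using assms(5-7)
proof (induction D rule: finite_induct)
  case empty
  then show ?case using assms(3,4) by auto
next
  case (insert w D)
  then obtain X Y where X: "max_indep_set W E X" "X \<inter> (C \<union> D) = {}"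
    and Y: "max_indep_set W E Y" "Y \<inter> insert w C = {}"
    by auto
  have "bipartite_meet A X Y \<inter> (C \<union> insert w D) = {}"
    using X(2) Y(2) insert.prems(1) unfolding bipartite_meet_def by blast
  then show ?case using max_indep_set_bipartite_meet[OF assms(1,2) X(1) Y(1)] by blast
qed

lemma max_indep_set_avoiding_pairs:
  assumes fin: "finite W" and bip: "bipartition W E A" and "finite D" "finite N" "N \<inter> A = {}"
    and X0: "max_indep_set W E X0" "X0 \<inter> N = {}"
    and single: "\<And>u. u \<in> D \<Longrightarrow> \<exists>X. max_indep_set W E X \<and> X \<inter> insert u N = {}"
    and pair: "\<And>u v. u \<in> D \<Longrightarrow> v \<in> D \<Longrightarrow> \<exists>X. max_indep_set W E X \<and> X \<inter> {u, v} = {}"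
  shows "\<exists>X. max_indep_set W E X \<and> X \<inter> (N \<union> D) = {}"
proof -
  define Da where "Da = D \<inter> A"
  define Db where "Db = D - A"
  have "finite Da" "Da \<subseteq> A" "finite (Db \<union> N)" "Db \<union> N \<subseteq> - A"
    using \<open>finite D\<close> \<open>finite N\<close> \<open>N \<inter> A = {}\<close> unfolding Da_def Db_def by auto
  note avoid_A = max_indep_set_avoiding_side[OF fin bip _ _ \<open>finite Da\<close> \<open>Da \<subseteq> A\<close>]
  have "\<forall>w\<in>Da. \<exists>Y. max_indep_set W E Y \<and> Y \<inter> insert w N = {}"
    unfolding Da_def by (blast intro: single)
  then obtain K where K: "max_indep_set W E K" "K \<inter> (N \<union> Da) = {}"
    using avoid_A[OF X0] by blast
  have "\<exists>Y. max_indep_set W E Y \<and> Y \<inter> insert z Da = {}" if z: "z \<in> Db" for z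
  proof -
    have "z \<in> D" using z unfolding Db_def by blast
    obtain Xz where "max_indep_set W E Xz" "Xz \<inter> {z} = {}"
      using single[OF \<open>z \<in> D\<close>] by blast
    moreover have "\<forall>w\<in>Da. \<exists>Y. max_indep_set W E Y \<and> Y \<inter> insert w {z} = {}"
      using \<open>z \<in> D\<close> unfolding Da_def by (blast intro: pair)
    ultimately show ?thesis using avoid_A by (metis insert_is_Un)
  qed
  then have "\<forall>w\<in>Db \<union> N. \<exists>Y. max_indep_set W E Y \<and> Y \<inter> insert w Da = {}"
    using K by blast
  moreover have "K \<inter> Da = {}" using K(2) by blast
  ultimately obtain X where "max_indep_set W E X" "X \<inter> (Da \<union> (Db \<union> N)) = {}"
    using max_indep_set_avoiding_side[OF fin bipartition_Compl[OF bip] K(1)]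
      \<open>finite (Db \<union> N)\<close> \<open>Db \<union> N \<subseteq> - A\<close> by metis
  then show ?thesis unfolding Da_def Db_def by blast
qed

lemma distinct_walk_length_le_card:
  assumes "finite V" "is_walk V E p" "distinct p"
  shows "length p \<le> card V"
proof -
  have "set p \<subseteq> V" using assms(2) unfolding is_walk_def by blast
  then show ?thesis using card_mono[OF assms(1)] distinct_card[OF assms(3)] by metis
qed

lemma longest_distinct_walk_exists:
  assumes "finite V" "V \<noteq> {}"
  obtains p where "is_walk V E p" "distinct p"
    and "\<And>q. is_walk V E q \<Longrightarrow> distinct q \<Longrightarrow> length q \<le> length p"
proof -
  obtain v where "v \<in> V" using assms(2) by blast
  then have "is_walk V E [v] \<and> distinct [v]" unfolding is_walk_def by simp
  moreover have "\<forall>q. is_walk V E q \<and> distinct q \<longrightarrow> length q < Suc (card V)"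
    using distinct_walk_length_le_card[OF assms(1)] by (blast intro: le_imp_less_Suc)
  ultimately show ?thesis
    using ex_has_greatest_nat[of "\<lambda>q. is_walk V E q \<and> distinct q" "[v]" length] that by blast
qed

lemma is_walk_snoc:
  assumes "is_walk V E p" "y \<in> V" "E (last p) y"
  shows "is_walk V E (p @ [y])"
  unfolding is_walk_def
proof (intro conjI allI impI)
  show "p @ [y] \<noteq> []" "set (p @ [y]) \<subseteq> V" using assms(1,2) unfolding is_walk_def by auto
  fix i assume i: "Suc i < length (p @ [y])"
  show "E ((p @ [y]) ! i) ((p @ [y]) ! Suc i)"
  proof (cases "Suc i < length p")
    case True
    then show ?thesis using assms(1) unfolding is_walk_def by (simp add: nth_append)
  next
    case False
    then have "i = length p - 1" using i by simp
    then show ?thesis using assms(1,3) unfolding is_walk_def by (simp add: nth_append last_conv_nth)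
  qed
qed

lemma is_cycle_drop:
  assumes "is_walk V E p" "distinct p" "i + 2 < length p" "E (last p) (p ! i)"
  shows "is_cycle V E (drop i p)"
  unfolding is_cycle_def is_walk_def
proof (intro conjI allI impI)
  show "drop i p \<noteq> []" "distinct (drop i p)" "3 \<le> length (drop i p)"
    using assms(2,3) by auto
  show "set (drop i p) \<subseteq> V" using assms(1) set_drop_subset unfolding is_walk_def by fast
  show "E (last (drop i p)) (hd (drop i p))"
    using assms(3,4) by (simp add: last_drop hd_drop_conv_nth)
  fix k assume "Suc k < length (drop i p)"
  then show "E (drop i p ! k) (drop i p ! Suc k)" using assms(1) unfolding is_walk_def by simp
qed

lemma acyclic_has_leaf:
  assumes "finite V" "V \<noteq> {}" "\<forall>x. \<not> E x x" "\<nexists>c. is_cycle V E c"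
  shows "\<exists>x\<in>V. \<forall>y\<in>V. \<forall>z\<in>V. E x y \<longrightarrow> E x z \<longrightarrow> y = z"
proof -
  obtain p where p: "is_walk V E p" "distinct p"
    and longest: "\<And>q. is_walk V E q \<Longrightarrow> distinct q \<Longrightarrow> length q \<le> length p"
    using longest_distinct_walk_exists[OF assms(1,2)] by blast
  have "p \<noteq> []" and "set p \<subseteq> V" using p(1) unfolding is_walk_def by auto
  define x where "x = last p"
  have "x \<in> V" using \<open>p \<noteq> []\<close> \<open>set p \<subseteq> V\<close> unfolding x_def by auto
  have x_nth: "x = p ! (length p - 1)" unfolding x_def using \<open>p \<noteq> []\<close> by (simp add: last_conv_nth)
  have "y = p ! (length p - 2)" if y: "y \<in> V" "E x y" for y
  proof -
    \<comment> \<open>otherwise the walk could be extended by y\<close>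
    have "y \<in> set p"
      using longest[OF is_walk_snoc[OF p(1) y[unfolded x_def]]] p(2) by fastforce
    then obtain i where i: "i < length p" "p ! i = y" by (metis in_set_conv_nth)
    have "i \<noteq> length p - 1" using i(2) y(2) x_nth assms(3) by auto
    moreover have "\<not> i + 2 < length p"
      using is_cycle_drop[OF p, of i] i(2) y(2) assms(4) unfolding x_def by blast
    ultimately have "i = length p - 2" using i(1) by linarith
    then show ?thesis using i(2) by simp
  qed
  then show ?thesis using \<open>x \<in> V\<close> by blast
qed

lemma acyclic_bipartition:
  assumes "finite V" "\<forall>x y. E x y \<longrightarrow> E y x" "\<forall>x. \<not> E x x" "\<nexists>c. is_cycle V E c"
  shows "\<exists>A. bipartition V E A"
  using assms
proof (induction "card V" arbitrary: V rule: less_induct)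
  case less
  show ?case
  proof (cases "V = {}")
    case True
    then show ?thesis unfolding bipartition_def by blast
  next
    case False
    obtain x where "x \<in> V" and leaf: "\<forall>y\<in>V. \<forall>z\<in>V. E x y \<longrightarrow> E x z \<longrightarrow> y = z"
      using acyclic_has_leaf[OF less.prems(1) False less.prems(3,4)] by blast
    have "\<nexists>c. is_cycle (V - {x}) E c"
      using less.prems(4) unfolding is_cycle_def is_walk_def by blast
    moreover have "card (V - {x}) < card V" using card_Diff1_less[OF less.prems(1) \<open>x \<in> V\<close>] .
    ultimately obtain B where B: "bipartition (V - {x}) E B"
      using less.hyps less.prems(1-3) by blast
    \<comment> \<open>x has at most one neighbour; put x on the side opposite to it\<close>
    define A where "A = (if \<exists>y\<in>V. E x y \<and> y \<in> B then B - {x} else insert x B)"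
    have mem_A: "v \<in> A \<longleftrightarrow> v \<in> B" if "v \<noteq> x" for v
      using that unfolding A_def by auto
    have edge_x: "x \<in> A \<longleftrightarrow> y \<notin> A" if "y \<in> V" "E x y" for y
    proof -
      have "(\<exists>y'\<in>V. E x y' \<and> y' \<in> B) \<longleftrightarrow> y \<in> B" using leaf that by blast
      moreover have "y \<noteq> x" using that less.prems(3) by blast
      ultimately show ?thesis using mem_A[of y] unfolding A_def by auto
    qed
    have "bipartition V E A"
      unfolding bipartition_def
    proof (intro ballI impI)
      fix p q assume pq: "p \<in> V" "q \<in> V" "E p q"
      consider "p = x" | "q = x" | "p \<noteq> x" "q \<noteq> x" by blast
      then show "p \<in> A \<longleftrightarrow> q \<notin> A"
      proof cases
        case 1
        then show ?thesis using edge_x pq by blast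
      next
        case 2
        then show ?thesis using edge_x[of p] pq less.prems(2) by blast
      next
        case 3
        then show ?thesis using B pq mem_A unfolding bipartition_def by blast
      qed
    qed
    then show ?thesis by blast
  qed
qed

lemma bipartite_alpha_critical_drop:
  assumes fin: "finite V" and sym: "\<forall>x y. E x y \<longrightarrow> E y x"
    and bip: "bipartition V E A" and "r \<in> A"
    and drop: "alpha (V - Z) E < alpha V E" and crit: "alpha_critical V E r"
  shows "(\<exists>u\<in>Z \<inter> V. \<exists>v\<in>Z \<inter> V. alpha V E > alpha (V - {u, v}) E \<and> alpha_critical (V - {u, v}) E r)
       \<or> (\<exists>u\<in>Z \<inter> V. alpha V E > alpha (V - {u}) E \<and> \<not> alpha_critical (V - {u}) E r)"
proof (rule ccontr)
  assume no_witness: "\<not> ?thesis"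
  have single: "alpha (V - {u}) E = alpha V E" if u: "u \<in> Z \<inter> V" for u
  proof -
    have "\<not> alpha (V - {u}) E < alpha V E"
      using no_witness u by (metis insert_absorb2)
    then show ?thesis using alpha_mono[OF fin, of "V - {u}" E] by simp
  qed
  have "r \<in> V" using crit unfolding alpha_critical_def by blast
  have "r \<notin> Z"
  proof
    assume "r \<in> Z"
    then have "alpha (V - {r}) E = alpha V E" using single \<open>r \<in> V\<close> by blast
    then show False using crit unfolding alpha_critical_def by simp
  qed
  define W where "W = V - {r}"
  define N where "N = {y \<in> V. E r y}"
  have finW: "finite W" using fin unfolding W_def by simp
  \<comment> \<open>every maximum independent set of V contains r, hence misses N\<close>
  have lift: "\<exists>X. max_indep_set W E X \<and> X \<inter> (N \<union> D) = {}"
    if S: "max_indep_set V E S" "S \<inter> D = {}" for S D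
  proof -
    have "r \<in> S" using alpha_critical_mem_max_indep_set[OF fin crit S(1)] .
    then have "(S - {r}) \<inter> N = {}"
      using S(1) unfolding max_indep_set_def independent_set_def N_def by blast
    then show ?thesis
      using max_indep_set_Diff_critical[OF fin crit S(1)] S(2) unfolding W_def by blast
  qed
  have avoid_N_u: "\<exists>X. max_indep_set W E X \<and> X \<inter> insert u N = {}" if u: "u \<in> Z \<inter> V" for u
  proof -
    obtain S where "max_indep_set V E S" "S \<inter> {u} = {}"
      using single[OF u] alpha_Diff_eq_iff[OF fin] by metis
    from lift[OF this] show ?thesis by simp
  qed
  have avoid_u_v: "\<exists>X. max_indep_set W E X \<and> X \<inter> {u, v} = {}"
    if u: "u \<in> Z \<inter> V" and v: "v \<in> Z \<inter> V" for u v
  proof -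
    have "r \<notin> {u, v}" using u v \<open>r \<notin> Z\<close> by blast
    moreover have "\<not> alpha_critical (V - {u, v}) E r" if "alpha (V - {u, v}) E < alpha V E"
      using no_witness u v that by blast
    ultimately show ?thesis
      using max_indep_set_Diff_critical_avoiding_pair[OF fin crit _ single[OF u]] unfolding W_def
      by blast
  qed
  obtain S0 where "max_indep_set V E S0" using max_indep_set_exists[OF fin] by blast
  then obtain X0 where X0: "max_indep_set W E X0" "X0 \<inter> N = {}" using lift[of S0 "{}"] by auto
  have "bipartition W E A" using bipartition_subset[OF bip] unfolding W_def by blast
  moreover have "N \<inter> A = {}"
    using bip \<open>r \<in> V\<close> \<open>r \<in> A\<close> unfolding bipartition_def N_def by blast
  moreover have "finite (Z \<inter> V)" "finite N" using fin unfolding N_def by auto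
  ultimately obtain X where "max_indep_set W E X" "X \<inter> (N \<union> (Z \<inter> V)) = {}"
    using max_indep_set_avoiding_pairs[OF finW _ _ _ _ X0 avoid_N_u avoid_u_v] by blast
  moreover have "X \<subseteq> V" using \<open>max_indep_set W E X\<close>
    unfolding max_indep_set_def independent_set_def W_def by blast
  ultimately have "X \<inter> (Z \<union> {y. E r y}) = {}" unfolding N_def by blast
  then show False
    using alpha_le_alpha_Diff_if_avoiding_neighbours[OF fin sym crit \<open>r \<notin> Z\<close>]
      \<open>max_indep_set W E X\<close> drop unfolding W_def by fastforce
qed

lemma bipartite_alpha_critical_gain:
  assumes fin: "finite V" and bip: "bipartition V E A" and "r \<in> A"
    and eq: "alpha V E = alpha (V - Z) E" and crit: "alpha_critical (V - Z) E r"
    and not_crit: "\<not> alpha_critical V E r"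
  shows "\<exists>u\<in>Z \<inter> V. alpha_critical (V - {u}) E r"
proof (rule ccontr)
  assume no_witness: "\<not> ?thesis"
  have r: "r \<in> V" "r \<notin> Z" using crit unfolding alpha_critical_def by auto
  obtain Y where Y: "max_indep_set V E Y" "Y \<inter> Z = {}"
    using alpha_Diff_eq_iff[OF fin] eq by metis
  have avoid_u_r: "\<exists>S. max_indep_set V E S \<and> S \<inter> insert u {r} = {}" if u: "u \<in> Z \<inter> V" for u
  proof -
    have "alpha (V - {u}) E = alpha V E" using Y u alpha_Diff_eq_iff[OF fin] by blast
    moreover have "alpha (V - {u} - {r}) E = alpha (V - {u}) E"
      using no_witness u r fin by (intro alpha_Diff_singleton_eq_if_not_critical) auto
    moreover have "V - {u} - {r} = V - insert u {r}" by auto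
    ultimately show ?thesis using alpha_Diff_eq_iff[OF fin] by metis
  qed
  obtain S0 where S0: "max_indep_set V E S0" "S0 \<inter> {r} = {}"
    using alpha_Diff_singleton_eq_if_not_critical[OF fin r(1) not_crit] alpha_Diff_eq_iff[OF fin]
    by metis
  have "finite (Z \<inter> V - A)" "Z \<inter> V - A \<subseteq> - A" using fin by auto
  moreover have "\<forall>w\<in>Z \<inter> V - A. \<exists>Y. max_indep_set V E Y \<and> Y \<inter> insert w {r} = {}"
    by (blast intro: avoid_u_r)
  ultimately obtain P where P: "max_indep_set V E P" "P \<inter> ({r} \<union> (Z \<inter> V - A)) = {}"
    using max_indep_set_avoiding_side[OF fin bipartition_Compl[OF bip] S0] by metis
  have "P \<subseteq> V" using P(1) unfolding max_indep_set_def independent_set_def by blast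
  then have "bipartite_meet A Y P \<inter> insert r Z = {}"
    using Y(2) P(2) \<open>r \<in> A\<close> unfolding bipartite_meet_def by blast
  then have "alpha (V - insert r Z) E = alpha V E"
    using max_indep_set_bipartite_meet[OF fin bip Y(1) P(1)] by (subst alpha_Diff_eq_iff[OF fin]) blast
  moreover have "V - insert r Z = V - Z - {r}" by auto
  ultimately have "alpha (V - Z - {r}) E = alpha (V - Z) E" using eq by (simp only:)
  then show False using crit unfolding alpha_critical_def by linarith
qed

theorem lemma8:
  fixes V :: "'a set" and E :: "'a \<Rightarrow> 'a \<Rightarrow> bool" and r :: 'a and Z :: "'a set"
  assumes "is_tree V E" and "r \<in> V"
  shows "(alpha V E > alpha (V - Z) E \<and> alpha_critical V E r \<longrightarrow>
            (\<exists>u\<in>Z \<inter> V. \<exists>v\<in>Z \<inter> V. alpha V E > alpha (V - {u, v}) E \<and> alpha_critical (V - {u, v}) E r)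
          \<or> (\<exists>u\<in>Z \<inter> V. alpha V E > alpha (V - {u}) E \<and> \<not> alpha_critical (V - {u}) E r))
       \<and> (alpha V E = alpha (V - Z) E \<and> alpha_critical (V - Z) E r \<and> \<not> alpha_critical V E r \<longrightarrow>
            (\<exists>u\<in>Z \<inter> V. alpha_critical (V - {u}) E r))"
proof -
  have fin: "finite V" and sym: "\<forall>x y. E x y \<longrightarrow> E y x"
    and irrefl: "\<forall>x. \<not> E x x" and acyclic: "\<nexists>c. is_cycle V E c"
    using assms(1) unfolding is_tree_def simple_graph_def by auto
  obtain A where "bipartition V E A"
    using acyclic_bipartition[OF fin sym irrefl acyclic] by blast
  then obtain A where bip: "bipartition V E A" "r \<in> A"
    using bipartition_Compl by (metis ComplI)
  show ?thesis
    using bipartite_alpha_critical_drop[OF fin sym bip] bipartite_alpha_critical_gain[OF fin bip]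
    by blast
qed

end
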